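(* Assume $\mathrm{recc}(C)\subseteq\mathrm{recc}(P^B)$ and fix $k\in N_2$. For $j\in N$ let $\beta^*_j=\sup\{\lambda\ge0:\bar x+\lambda\bar r^j\in S_k^C\}$. Then $$\beta^*_j=\begin{cases}0&\text{if } j\in N_0\setminus J,\\ \beta_j&\text{if } j\in N_2\setminus J,\\ +\infty&\text{if } j\in J.\end{cases}$$
   Context: Let $A\in\mathbb{R}^{m\times n}$ have full row rank, $b\in\mathbb{R}^m$, and $P=\{x\in\mathbb{R}^n_+:Ax=b\}$. Let $C\subseteq\mathbb{R}^n$ be an open convex set. Fix a basis $B$ of $P$ with nonbasic set $N=\{1,\dots,n\}\setminus B$. Write $P=\{x:x_i=\bar b_i-\sum_{j\in N}\bar a_{ij}x_j\ (i\in B),\ x\ge0\}$ with $\bar b\ge0$. The basic solution $\bar x$ has $\bar x_i=\bar b_i$ ($i\in B$) and $0$ ($i\in N$). $P^B$ is obtained by dropping $x_i\ge0$ for $i\in B$. For $j\in N$, $\bar r^j$ has $\bar r^j_k=-\bar a_{kj}$ ($k\in B$), $\bar r^j_j=1$, and $0$ otherwise. Thus $P^B=\{\bar x+\sum_{j\in N}x_j\bar r^j:x_j\ge0\}$. It is assumed that $\bar x\notin\mathrm{cl}(C)$. For $j\in N$, $\alpha_j=\inf\{\lambda\ge0:\bar x+\lambda\bar r^j\in C\}$ and $\beta_j=\sup\{\lambda\ge0:\bar x+\lambda\bar r^j\in C\}$, with $\alpha_j=+\infty$, $\beta_j=-\infty$ if the halfline misses $C$. The set $N$ is partitioned into - $N_0=\{j:\alpha_j=+\infty,\beta_j=-\infty\}$,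 - $N_1=\{j:\alpha_j\in(0,\infty),\beta_j=+\infty\}$, - $N_2=\{j:\alpha_j\in(0,\infty),\beta_j\in(\alpha_j,\infty)\}$. For a set $K$, $\mathrm{recc}(K)=\{d:x+\lambda d\in K\ \forall x\in K,\lambda\ge0\}$. For $k\in N_2$, $S_k^C=\{\bar x\}+\mathrm{conv}\big(\bigcup_{j\in N_2}\{\lambda\bar r^j:0\le\lambda<\beta_j\}\big)+\{\lambda\bar r^k:\lambda\le0\}+\mathrm{recc}(C)$, and $J=\{i\in N:\bar r^i\in\mathrm{recc}(S_k^C)\}$. *)

theory Defs
  imports "HOL-Analysis.Analysis"
begin

text \<open>Index set {1..n} is the finite type 'n, rows {1..m} the finite type 'm.\<close>

definition is_basis :: "real^'n^'m \<Rightarrow> 'n set \<Rightarrow> bool" where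
  "is_basis A B \<longleftrightarrow> card B = CARD('m) \<and> inj_on (\<lambda>i. column i A) B
      \<and> independent ((\<lambda>i. column i A) ` B)"

text \<open>Basic solution x-bar: x_N = 0 and A x = b (unique when B is a basis).\<close>
definition basic_sol :: "real^'n^'m \<Rightarrow> real^'m \<Rightarrow> 'n set \<Rightarrow> real^'n" where
  "basic_sol A b B = (THE x. A *v x = b \<and> (\<forall>i. i \<notin> B \<longrightarrow> x $ i = 0))"

text \<open>Ray r-bar^j for nonbasic j: r_j = 1, r_k = 0 for other nonbasic k, and
  r_B = - A_B^{-1} A_j, i.e. A r = 0 (unique when B is a basis).\<close>
definition ray :: "real^'n^'m \<Rightarrow> 'n set \<Rightarrow> 'n \<Rightarrow> real^'n" where
  "ray A B j = (THE r. A *v r = 0 \<and> r $ j = 1 \<and> (\<forall>k. k \<notin> B \<and> k \<noteq> j \<longrightarrow> r $ k = 0))"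

text \<open>P^B: drop the nonnegativity of the basic variables.\<close>
definition PB :: "real^'n^'m \<Rightarrow> real^'m \<Rightarrow> 'n set \<Rightarrow> (real^'n) set" where
  "PB A b B = {x. A *v x = b \<and> (\<forall>i. i \<notin> B \<longrightarrow> 0 \<le> x $ i)}"

definition recc :: "('a::real_vector) set \<Rightarrow> 'a set" where
  "recc K = {d. \<forall>x\<in>K. \<forall>l::real. l \<ge> 0 \<longrightarrow> x + l *\<^sub>R d \<in> K}"

text \<open>Parameters of the halfline x0 + lambda d (lambda >= 0) in a set K;
  Inf/Sup of the empty set in ereal are +infinity / -infinity as in the paper.\<close>
definition hl_inf :: "('a::real_vector) set \<Rightarrow> 'a \<Rightarrow> 'a \<Rightarrow> ereal" where
  "hl_inf K x0 d = Inf (ereal ` {l. l \<ge> 0 \<and> x0 + l *\<^sub>R d \<in> K})"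

definition hl_sup :: "('a::real_vector) set \<Rightarrow> 'a \<Rightarrow> 'a \<Rightarrow> ereal" where
  "hl_sup K x0 d = Sup (ereal ` {l. l \<ge> 0 \<and> x0 + l *\<^sub>R d \<in> K})"

definition N0 :: "(real^'n) set \<Rightarrow> real^'n \<Rightarrow> ('n \<Rightarrow> real^'n) \<Rightarrow> 'n set \<Rightarrow> 'n set" where
  "N0 C x r N = {j\<in>N. hl_inf C x (r j) = \<infinity> \<and> hl_sup C x (r j) = -\<infinity>}"

definition N1 :: "(real^'n) set \<Rightarrow> real^'n \<Rightarrow> ('n \<Rightarrow> real^'n) \<Rightarrow> 'n set \<Rightarrow> 'n set" where
  "N1 C x r N = {j\<in>N. 0 < hl_inf C x (r j) \<and> hl_inf C x (r j) < \<infinity> \<and> hl_sup C x (r j) = \<infinity>}"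

definition N2 :: "(real^'n) set \<Rightarrow> real^'n \<Rightarrow> ('n \<Rightarrow> real^'n) \<Rightarrow> 'n set \<Rightarrow> 'n set" where
  "N2 C x r N = {j\<in>N. 0 < hl_inf C x (r j) \<and> hl_inf C x (r j) < \<infinity>
        \<and> hl_inf C x (r j) < hl_sup C x (r j) \<and> hl_sup C x (r j) < \<infinity>}"

definition S_kC :: "(real^'n) set \<Rightarrow> real^'n \<Rightarrow> ('n \<Rightarrow> real^'n) \<Rightarrow> 'n set \<Rightarrow> 'n \<Rightarrow> (real^'n) set" where
  "S_kC C x r N k =
     {x + u + v + w | u v w.
        u \<in> convex hull (\<Union>j\<in>N2 C x r N. {l *\<^sub>R r j | l. 0 \<le> l \<and> ereal l < hl_sup C x (r j)})
      \<and> v \<in> {l *\<^sub>R r k | l. l \<le> 0}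
      \<and> w \<in> recc C}"

definition Jset :: "(real^'n) set \<Rightarrow> real^'n \<Rightarrow> ('n \<Rightarrow> real^'n) \<Rightarrow> 'n set \<Rightarrow> 'n \<Rightarrow> 'n set" where
  "Jset C x r N k = {i\<in>N. r i \<in> recc (S_kC C x r N k)}"

end

theory Submission
  imports Defs
begin

text \<open>Every w \<in> recc C lies in the kernel of A with nonnegative nonbasic coordinates, so it is
  the combination of the rays r^i weighted by its nonbasic coordinates. Suppose that
  xb + \<lambda> r^j lies in S_k^C although \<lambda> exceeds the j-th coordinate of every point of the
  convex hull part (this is the case for \<lambda> > 0 when j \<in> N0, and for \<lambda> \<ge> \<beta>_j when j \<in> N2).
  Comparing nonbasic coordinates forces the recc C part of that point to be
  w_j r^j + w_k r^k with w_j > 0. For j \<noteq> k this writes r^j as a nonnegative combination of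
  recession directions of S_k^C (elements of recc C and -r^k), so j \<in> J; for j = k it puts
  r^k into recc C, contradicting \<beta>_k < \<infinity>. Below \<beta>_j the points xb + \<lambda> r^j lie in S_k^C by
  construction.\<close>

lemma is_basis_kernel_eq_0:
  fixes A :: "real^'n^'m"
  assumes "is_basis A B" "A *v d = 0" "\<forall>i. i \<notin> B \<longrightarrow> d $ i = 0"
  shows "d = 0"
proof -
  let ?c = "\<lambda>i. column i A"
  have inj: "inj_on ?c B" and ind: "independent (?c ` B)"
    using assms(1) by (auto simp: is_basis_def)
  have "(\<Sum>i\<in>B. d $ i *\<^sub>R ?c i) = (\<Sum>i\<in>UNIV. d $ i *\<^sub>R ?c i)"
    by (rule sum.mono_neutral_left) (use assms(3) in auto)
  also have "\<dots> = 0"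
    using assms(2) by (simp add: matrix_mult_sum scalar_mult_eq_scaleR)
  finally have "(\<Sum>v\<in>?c ` B. d $ inv_into B ?c v *\<^sub>R v) = 0"
    by (simp add: sum.reindex[OF inj] inv_into_f_f[OF inj])
  then have "\<forall>v\<in>?c ` B. d $ inv_into B ?c v = 0"
    using ind dependent_finite[of "?c ` B"] by auto
  then have "\<forall>i\<in>B. d $ i = 0"
    by (auto simp: inv_into_f_f[OF inj])
  then show ?thesis
    using assms(3) by (metis vec_eq_iff zero_index)
qed

lemma is_basis_solvable:
  fixes A :: "real^'n^'m"
  assumes "is_basis A B"
  shows "\<exists>x. A *v x = y \<and> (\<forall>i. i \<notin> B \<longrightarrow> x $ i = 0)"
proof -
  let ?c = "\<lambda>i. column i A"
  have inj: "inj_on ?c B" and ind: "independent (?c ` B)" and "card B = CARD('m)"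
    using assms by (auto simp: is_basis_def)
  then have "card (?c ` B) = DIM(real^'m)"
    by (simp add: card_image)
  then have "y \<in> span (?c ` B)"
    using card_ge_dim_independent[OF _ ind, of UNIV] by (auto simp: dim_UNIV)
  then obtain u where u: "(\<Sum>v\<in>?c ` B. u v *\<^sub>R v) = y"
    using span_finite[of "?c ` B"] by auto
  define x :: "real^'n" where "x = (\<chi> i. if i \<in> B then u (?c i) else 0)"
  have "A *v x = (\<Sum>i\<in>UNIV. x $ i *\<^sub>R ?c i)"
    by (simp add: matrix_mult_sum scalar_mult_eq_scaleR)
  also have "\<dots> = (\<Sum>i\<in>B. u (?c i) *\<^sub>R ?c i)"
    by (rule sum.mono_neutral_cong_right) (auto simp: x_def)
  also have "\<dots> = y"
    using u by (simp add: sum.reindex[OF inj])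
  finally show ?thesis
    by (auto simp: x_def)
qed

lemma is_basis_unique_solution:
  fixes A :: "real^'n^'m"
  assumes "is_basis A B"
  shows "\<exists>!x. A *v x = y \<and> (\<forall>i. i \<notin> B \<longrightarrow> x $ i = 0)"
proof -
  have "x = z" if "A *v x = y \<and> (\<forall>i. i \<notin> B \<longrightarrow> x $ i = 0)"
    and "A *v z = y \<and> (\<forall>i. i \<notin> B \<longrightarrow> z $ i = 0)" for x z
    using is_basis_kernel_eq_0[OF assms, of "x - z"] that
    by (simp add: matrix_vector_mult_diff_distrib)
  then show ?thesis
    using is_basis_solvable[OF assms] by blast
qed

lemma basic_sol_spec:
  fixes A :: "real^'n^'m"
  assumes "is_basis A B"
  shows "A *v basic_sol A b B = b" and "i \<notin> B \<Longrightarrow> basic_sol A b B $ i = 0"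
  using theI'[OF is_basis_unique_solution[OF assms, of b]] by (auto simp: basic_sol_def)

lemma ray_spec:
  fixes A :: "real^'n^'m"
  assumes "is_basis A B" "j \<notin> B"
  shows "A *v ray A B j = 0" and "i \<notin> B \<Longrightarrow> ray A B j $ i = (if i = j then 1 else 0)"
proof -
  obtain x where x: "A *v x = A *v axis j 1 \<and> (\<forall>i. i \<notin> B \<longrightarrow> x $ i = 0)"
    using is_basis_solvable[OF assms(1)] by blast
  let ?P = "\<lambda>r. A *v r = 0 \<and> r $ j = 1 \<and> (\<forall>k. k \<notin> B \<and> k \<noteq> j \<longrightarrow> r $ k = 0)"
  have P: "?P (axis j 1 - x)"
    using x assms(2) by (auto simp: matrix_vector_mult_diff_distrib axis_def)
  have "z = axis j 1 - x" if "?P z" for z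
  proof -
    have "(z - (axis j 1 - x)) $ i = 0" if "i \<notin> B" for i
      using \<open>?P z\<close> P that by (cases "i = j") auto
    then show ?thesis
      using is_basis_kernel_eq_0[OF assms(1), of "z - (axis j 1 - x)"] \<open>?P z\<close> P
      by (simp add: matrix_vector_mult_diff_distrib)
  qed
  then have "?P (ray A B j)"
    unfolding ray_def by (rule theI[of ?P, OF P])
  then show "A *v ray A B j = 0" and "i \<notin> B \<Longrightarrow> ray A B j $ i = (if i = j then 1 else 0)"
    by auto
qed

lemma kernel_eq_sum_rays:
  fixes A :: "real^'n^'m"
  assumes "is_basis A B" "A *v w = 0"
  shows "w = (\<Sum>i\<in>UNIV - B. w $ i *\<^sub>R ray A B i)"
proof -
  let ?v = "\<Sum>i\<in>UNIV - B. w $ i *\<^sub>R ray A B i"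
  have "A *v ?v = 0"
    using ray_spec(1)[OF assms(1)]
    by (simp add: linear_sum[OF matrix_vector_mul_linear] matrix_vector_mult_scaleR)
  moreover have "?v $ i = w $ i" if "i \<notin> B" for i
  proof -
    have "?v $ i = (\<Sum>l\<in>UNIV - B. if l = i then w $ l else 0)"
      unfolding sum_component by (rule sum.cong) (use that ray_spec(2)[OF assms(1)] in auto)
    then show ?thesis
      using that by simp
  qed
  ultimately show ?thesis
    using is_basis_kernel_eq_0[OF assms(1), of "w - ?v"] assms(2)
    by (simp add: matrix_vector_mult_diff_distrib)
qed

lemma recc_PB_kernel_nonneg:
  fixes A :: "real^'n^'m"
  assumes "is_basis A B" "d \<in> recc (PB A b B)"
  shows "A *v d = 0" and "i \<notin> B \<Longrightarrow> 0 \<le> d $ i"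
proof -
  let ?x = "basic_sol A b B"
  have "?x \<in> PB A b B"
    using basic_sol_spec[OF assms(1)] by (simp add: PB_def)
  moreover have "\<forall>y\<in>PB A b B. \<forall>l\<ge>0. y + l *\<^sub>R d \<in> PB A b B"
    using assms(2) by (simp add: recc_def)
  ultimately have "?x + 1 *\<^sub>R d \<in> PB A b B"
    using zero_le_one by blast
  then have "A *v ?x + A *v d = b" and "i \<notin> B \<Longrightarrow> 0 \<le> ?x $ i + d $ i"
    by (simp_all add: PB_def matrix_vector_right_distrib)
  then show "A *v d = 0" and "i \<notin> B \<Longrightarrow> 0 \<le> d $ i"
    using basic_sol_spec[OF assms(1)] by simp_all
qed

lemma recc_add: "d \<in> recc K \<Longrightarrow> e \<in> recc K \<Longrightarrow> d + e \<in> recc K"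
  unfolding recc_def by (simp add: scaleR_add_right flip: add.assoc)

lemma recc_scaleR: "d \<in> recc K \<Longrightarrow> 0 \<le> c \<Longrightarrow> c *\<^sub>R d \<in> recc K"
  unfolding recc_def by simp

lemma zero_in_recc: "0 \<in> recc K"
  unfolding recc_def by simp

lemma Sup_ereal_nonneg_below:
  assumes "0 < \<beta>"
  shows "Sup (ereal ` {l. 0 \<le> l \<and> ereal l < \<beta>}) = \<beta>"
proof -
  have "ereal ` {l. 0 \<le> l \<and> ereal l < \<beta>} = {0..<\<beta>}"
  proof (intro set_eqI iffI)
    fix y assume "y \<in> {0..<\<beta>}"
    then have "y = ereal (real_of_ereal y)"
      by (cases y) auto
    then show "y \<in> ereal ` {l. 0 \<le> l \<and> ereal l < \<beta>}"
      using \<open>y \<in> {0..<\<beta>}\<close> by (metis (mono_tags) atLeastLessThan_iff ereal_less_eq(5) image_eqI mem_Collect_eq)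
  qed auto
  then show ?thesis
    using assms by simp
qed

lemma hl_sup_eq_infinity:
  assumes "x + l0 *\<^sub>R d \<in> K" "0 \<le> l0" "d \<in> recc K"
  shows "hl_sup K x d = \<infinity>"
proof -
  have far: "x + l *\<^sub>R d \<in> K" if "l0 \<le> l" for l
  proof -
    have "(x + l0 *\<^sub>R d) + (l - l0) *\<^sub>R d \<in> K"
      using assms(1,3) that unfolding recc_def by simp
    then show ?thesis
      by (simp add: algebra_simps)
  qed
  have "\<exists>l\<in>{l. 0 \<le> l \<and> x + l *\<^sub>R d \<in> K}. y < ereal l" if y: "y < \<infinity>" for y
  proof -
    obtain n :: nat where n: "y < ereal (real n)"
      using y less_PInf_Ex_of_nat[of y] by auto
    have "ereal (real n) \<le> ereal (l0 + real n)"
      using assms(2) by simp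
    with n have "y < ereal (l0 + real n)"
      by (rule order.strict_trans2)
    moreover have "l0 + real n \<in> {l. 0 \<le> l \<and> x + l *\<^sub>R d \<in> K}"
      using far[of "l0 + real n"] assms(2) by simp
    ultimately show ?thesis
      by blast
  qed
  then have "Sup (ereal ` {l. 0 \<le> l \<and> x + l *\<^sub>R d \<in> K}) = top"
    unfolding Sup_eq_top_iff by (auto simp: top_ereal_def)
  then show ?thesis
    by (simp add: hl_sup_def top_ereal_def)
qed

lemma convex_component_vimage: "convex T \<Longrightarrow> convex {x::real^'n. x $ i \<in> T}"
  using convex_linear_vimage[OF bounded_linear.linear[OF bounded_linear_vec_nth], of T i]
  by (simp add: vimage_def)

lemma convex_hull_component_in:
  fixes X :: "(real^'n) set"
  assumes "convex T" "\<And>y. y \<in> X \<Longrightarrow> y $ i \<in> T" "u \<in> convex hull X"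
  shows "u $ i \<in> T"
  using hull_minimal[of X "{x. x $ i \<in> T}" convex] convex_component_vimage[OF assms(1)] assms(2,3)
  by blast

definition ray_segments :: "(real^'n) set \<Rightarrow> real^'n \<Rightarrow> ('n \<Rightarrow> real^'n) \<Rightarrow> 'n set \<Rightarrow> (real^'n) set"
  where "ray_segments C x r N =
    (\<Union>j\<in>N2 C x r N. {l *\<^sub>R r j | l. 0 \<le> l \<and> ereal l < hl_sup C x (r j)})"

lemma S_kC_iff:
  "y \<in> S_kC C x r N k \<longleftrightarrow> (\<exists>u m w. y = x + u + m *\<^sub>R r k + w
     \<and> u \<in> convex hull ray_segments C x r N \<and> m \<le> 0 \<and> w \<in> recc C)"
  unfolding S_kC_def ray_segments_def by blast

lemma recc_subset_recc_S_kC: "recc C \<subseteq> recc (S_kC C x r N k)"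
proof
  fix d assume d: "d \<in> recc C"
  show "d \<in> recc (S_kC C x r N k)"
    unfolding recc_def
  proof (intro CollectI ballI allI impI)
    fix y and l :: real assume "y \<in> S_kC C x r N k" "0 \<le> l"
    then obtain u m w where "y = x + u + m *\<^sub>R r k + w" "u \<in> convex hull ray_segments C x r N"
      "m \<le> 0" "w \<in> recc C"
      unfolding S_kC_iff by blast
    moreover have "w + l *\<^sub>R d \<in> recc C"
      using \<open>w \<in> recc C\<close> d \<open>0 \<le> l\<close> by (intro recc_add recc_scaleR)
    ultimately show "y + l *\<^sub>R d \<in> S_kC C x r N k"
      unfolding S_kC_iff by (metis add.assoc)
  qed
qed

lemma uminus_ray_in_recc_S_kC: "- r k \<in> recc (S_kC C x r N k)"
  unfolding recc_def
proof (intro CollectI ballI allI impI)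
  fix y and l :: real assume "y \<in> S_kC C x r N k" "0 \<le> l"
  then obtain u m w where "y = x + u + m *\<^sub>R r k + w" "u \<in> convex hull ray_segments C x r N"
    "m \<le> 0" "w \<in> recc C"
    unfolding S_kC_iff by blast
  moreover have "y + l *\<^sub>R - r k = x + u + (m - l) *\<^sub>R r k + w"
    using \<open>y = _\<close> by (simp add: algebra_simps)
  ultimately show "y + l *\<^sub>R - r k \<in> S_kC C x r N k"
    using \<open>0 \<le> l\<close> unfolding S_kC_iff by fastforce
qed

lemma add_convex_hull_ray_segments_in_S_kC:
  "u \<in> convex hull ray_segments C x r N \<Longrightarrow> x + u \<in> S_kC C x r N k"
  unfolding S_kC_iff using zero_in_recc[of C]
  by (intro exI[where x = u] exI[where x = "0::real"] exI[where x = 0]) simp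

lemma hl_sup_pos_if_N2: "j \<in> N2 C x r N \<Longrightarrow> 0 < hl_sup C x (r j)"
  unfolding N2_def by (auto dest: order.strict_trans)

lemma halfline_meets_if_hl_inf_finite:
  assumes "hl_inf K x d < \<infinity>"
  obtains l where "0 \<le> l" "x + l *\<^sub>R d \<in> K"
proof -
  have "{l. 0 \<le> l \<and> x + l *\<^sub>R d \<in> K} \<noteq> {}"
  proof
    assume "{l. 0 \<le> l \<and> x + l *\<^sub>R d \<in> K} = {}"
    then have "hl_inf K x d = top"
      unfolding hl_inf_def by (simp only: image_empty Inf_empty)
    then show False
      using assms by (simp add: top_ereal_def)
  qed
  then show thesis
    using that by blast
qed

locale basis_with_convex_set =
  fixes A :: "real^'n^'m" and b :: "real^'m" and B :: "'n set" and C :: "(real^'n) set" and k :: 'n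
  assumes basis: "is_basis A B"
    and recc_C_subset: "recc C \<subseteq> recc (PB A b B)"
    and k_in_N2: "k \<in> N2 C (basic_sol A b B) (ray A B) (UNIV - B)"
begin

abbreviation "N \<equiv> UNIV - B"
abbreviation "xb \<equiv> basic_sol A b B"
abbreviation "r \<equiv> ray A B"
abbreviation "S \<equiv> S_kC C xb r N k"
abbreviation "X \<equiv> ray_segments C xb r N"

lemma k_nonbasic: "k \<in> N"
  using k_in_N2 by (simp add: N2_def)

lemma ray_coord: "j \<in> N \<Longrightarrow> i \<in> N \<Longrightarrow> r j $ i = (if i = j then 1 else 0)"
  using ray_spec(2)[OF basis] by simp

lemma recc_C_kernel: "w \<in> recc C \<Longrightarrow> A *v w = 0"
  using recc_PB_kernel_nonneg(1)[OF basis] recc_C_subset by blast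

lemma recc_C_nonneg: "w \<in> recc C \<Longrightarrow> i \<in> N \<Longrightarrow> 0 \<le> w $ i"
  using recc_PB_kernel_nonneg(2)[OF basis] recc_C_subset by blast

lemma convex_hull_ray_segments_nonneg:
  assumes "u \<in> convex hull X" "i \<in> N"
  shows "0 \<le> u $ i"
proof -
  have "y $ i \<in> {0..}" if "y \<in> X" for y
    using that assms(2) by (auto simp: ray_segments_def N2_def ray_coord)
  then show ?thesis
    using convex_hull_component_in[OF convex_real_interval(1) _ assms(1)] by simp
qed

lemma convex_hull_ray_segments_less:
  assumes "u \<in> convex hull X" "j \<in> N" "0 < l" "hl_sup C xb (r j) \<le> ereal l"
  shows "u $ j < l"
proof -
  have "l' < l" if "ereal l' < hl_sup C xb (r j)" for l'
    using order.strict_trans2[OF that assms(4)] by simp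
  then have "y $ j \<in> {..<l}" if "y \<in> X" for y
    using that assms(2,3) by (auto simp: ray_segments_def N2_def ray_coord)
  then have "u $ j \<in> {..<l}"
    by (rule convex_hull_component_in[OF convex_real_interval(4) _ assms(1)])
  then show ?thesis
    by simp
qed

lemma basic_sol_in_S: "xb \<in> S"
proof -
  have "0 \<in> X"
    using k_in_N2 hl_sup_pos_if_N2[OF k_in_N2] unfolding ray_segments_def zero_ereal_def by force
  then show ?thesis
    using add_convex_hull_ray_segments_in_S_kC[OF hull_inc] by fastforce
qed

lemma recc_C_witness_on_rays:
  assumes "j \<in> N" "0 < l" "hl_sup C xb (r j) \<le> ereal l" "xb + l *\<^sub>R r j \<in> S"
  obtains w where "w \<in> recc C" "0 < w $ j" "w = (\<Sum>i\<in>{j, k}. w $ i *\<^sub>R r i)"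
proof -
  obtain u m w where eq: "xb + l *\<^sub>R r j = xb + u + m *\<^sub>R r k + w"
    and u: "u \<in> convex hull X" and "m \<le> 0" and w: "w \<in> recc C"
    using assms(4) unfolding S_kC_iff by blast
  have coord: "l * r j $ i = u $ i + m * r k $ i + w $ i" for i
    using arg_cong[OF eq, of "\<lambda>v. v $ i"] by simp
  have "u $ j < l"
    using convex_hull_ray_segments_less[OF u assms(1-3)] .
  then have "0 < w $ j"
    using coord[of j] \<open>m \<le> 0\<close> ray_coord[OF k_nonbasic assms(1)] ray_coord[OF assms(1,1)]
    by (auto split: if_splits)
  have "w $ i = 0" if "i \<in> N - {j, k}" for i
    using coord[of i] that ray_coord[OF assms(1), of i] ray_coord[OF k_nonbasic, of i]
      convex_hull_ray_segments_nonneg[OF u, of i] recc_C_nonneg[OF w, of i]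
    by auto
  then have "(\<Sum>i\<in>N. w $ i *\<^sub>R r i) = (\<Sum>i\<in>{j, k}. w $ i *\<^sub>R r i)"
    using assms(1) k_nonbasic by (intro sum.mono_neutral_right) auto
  then show ?thesis
    using that w \<open>0 < w $ j\<close> kernel_eq_sum_rays[OF basis recc_C_kernel[OF w]] by simp
qed

lemma beyond_hl_sup_imp_recc_S:
  assumes "j \<in> N" "0 < l" "hl_sup C xb (r j) \<le> ereal l" "xb + l *\<^sub>R r j \<in> S"
  shows "j \<noteq> k" and "r j \<in> recc S"
proof -
  obtain w where w: "w \<in> recc C" "0 < w $ j" "w = (\<Sum>i\<in>{j, k}. w $ i *\<^sub>R r i)"
    using recc_C_witness_on_rays[OF assms] .
  define cj ck where "cj = w $ j" and "ck = w $ k"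
  show "j \<noteq> k"
  proof
    assume "j = k"
    then have "w = ck *\<^sub>R r k"
      using w(3) by (simp add: ck_def)
    moreover have "0 < ck"
      using w(2) \<open>j = k\<close> by (simp add: ck_def)
    ultimately have "r k = (1 / ck) *\<^sub>R w"
      by simp
    then have "r k \<in> recc C"
      using recc_scaleR[OF w(1), of "1 / ck"] \<open>0 < ck\<close> by simp
    moreover obtain l0 where "0 \<le> l0" "xb + l0 *\<^sub>R r k \<in> C"
      using halfline_meets_if_hl_inf_finite k_in_N2 unfolding N2_def by blast
    ultimately have "hl_sup C xb (r k) = \<infinity>"
      by (intro hl_sup_eq_infinity)
    then show False
      using k_in_N2 by (simp add: N2_def)
  qed
  then have "w = cj *\<^sub>R r j + ck *\<^sub>R r k"
    using w(3) by (simp add: cj_def ck_def)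
  moreover have cj: "0 < cj" and ck: "0 \<le> ck"
    using w(2) recc_C_nonneg[OF w(1) k_nonbasic] by (simp_all add: cj_def ck_def)
  ultimately have "r j = (1 / cj) *\<^sub>R w + (ck / cj) *\<^sub>R - r k"
    by (simp add: scaleR_add_right)
  moreover have "(1 / cj) *\<^sub>R w \<in> recc S"
    using w(1) cj by (intro recc_scaleR subsetD[OF recc_subset_recc_S_kC]) auto
  moreover have "(ck / cj) *\<^sub>R - r k \<in> recc S"
    using cj ck by (intro recc_scaleR uminus_ray_in_recc_S_kC) simp
  ultimately show "r j \<in> recc S"
    by (metis recc_add)
qed

lemma hl_sup_S_if_J: "j \<in> Jset C xb r N k \<Longrightarrow> hl_sup S xb (r j) = \<infinity>"
  using hl_sup_eq_infinity[of xb 0 "r j" S] basic_sol_in_S by (simp add: Jset_def)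

lemma hl_sup_S_if_N0:
  assumes "j \<in> N0 C xb r N - Jset C xb r N k"
  shows "hl_sup S xb (r j) = 0"
proof -
  have "{l. 0 \<le> l \<and> xb + l *\<^sub>R r j \<in> S} = {0}"
  proof (intro set_eqI iffI)
    fix l assume l: "l \<in> {l. 0 \<le> l \<and> xb + l *\<^sub>R r j \<in> S}"
    have "\<not> 0 < l"
      using beyond_hl_sup_imp_recc_S(2)[of j l] l assms by (auto simp: Jset_def N0_def)
    then show "l \<in> {0}"
      using l by simp
  qed (simp add: basic_sol_in_S)
  then show ?thesis
    by (simp add: hl_sup_def zero_ereal_def)
qed

lemma hl_sup_S_if_N2:
  assumes "j \<in> N2 C xb r N - Jset C xb r N k"
  shows "hl_sup S xb (r j) = hl_sup C xb (r j)"
proof -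
  have "{l. 0 \<le> l \<and> xb + l *\<^sub>R r j \<in> S} = {l. 0 \<le> l \<and> ereal l < hl_sup C xb (r j)}"
  proof (intro set_eqI iffI)
    fix l assume l: "l \<in> {l. 0 \<le> l \<and> xb + l *\<^sub>R r j \<in> S}"
    show "l \<in> {l. 0 \<le> l \<and> ereal l < hl_sup C xb (r j)}"
    proof (rule ccontr)
      assume "l \<notin> {l. 0 \<le> l \<and> ereal l < hl_sup C xb (r j)}"
      then have "hl_sup C xb (r j) \<le> ereal l"
        using l by auto
      moreover have "0 < l"
        using order.strict_trans2[OF hl_sup_pos_if_N2[of j C xb r N] calculation] assms by simp
      ultimately have "r j \<in> recc S"
        using beyond_hl_sup_imp_recc_S(2) l assms by (auto simp: N2_def)
      then show False
        using assms by (auto simp: Jset_def N2_def)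
    qed
  next
    fix l assume l: "l \<in> {l. 0 \<le> l \<and> ereal l < hl_sup C xb (r j)}"
    then have "l *\<^sub>R r j \<in> X"
      using assms unfolding ray_segments_def by blast
    then show "l \<in> {l. 0 \<le> l \<and> xb + l *\<^sub>R r j \<in> S}"
      using add_convex_hull_ray_segments_in_S_kC[OF hull_inc] l by auto
  qed
  then have "hl_sup S xb (r j) = Sup (ereal ` {l. 0 \<le> l \<and> ereal l < hl_sup C xb (r j)})"
    unfolding hl_sup_def[of S] by simp
  also have "\<dots> = hl_sup C xb (r j)"
    using Sup_ereal_nonneg_below[OF hl_sup_pos_if_N2[of j C xb r N]] assms by simp
  finally show ?thesis .
qed

end

theorem proposition7:
  fixes A :: "real^'n^'m" and b :: "real^'m" and B :: "'n set"
    and C :: "(real^'n) set" and k :: "'n"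
  defines "N \<equiv> UNIV - B"
    and "xb \<equiv> basic_sol A b B"
    and "r \<equiv> ray A B"
  assumes "rank A = CARD('m)"
    and "is_basis A B"
    and "\<forall>i. 0 \<le> xb $ i"
    and "open C" and "convex C"
    and "xb \<notin> closure C"
    and "recc C \<subseteq> recc (PB A b B)"
    and "k \<in> N2 C xb r N"
  shows "\<forall>j\<in>N.
     (j \<in> N0 C xb r N - Jset C xb r N k \<longrightarrow> hl_sup (S_kC C xb r N k) xb (r j) = 0)
   \<and> (j \<in> N2 C xb r N - Jset C xb r N k \<longrightarrow> hl_sup (S_kC C xb r N k) xb (r j) = hl_sup C xb (r j))
   \<and> (j \<in> Jset C xb r N k \<longrightarrow> hl_sup (S_kC C xb r N k) xb (r j) = \<infinity>)"
proof -
  interpret basis_with_convex_set A b B C k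
    using assms(5,10,11) unfolding N_def xb_def r_def by unfold_locales
  show ?thesis
    unfolding N_def xb_def r_def using hl_sup_S_if_J hl_sup_S_if_N0 hl_sup_S_if_N2 by blast
qed

end
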